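(* Let $A_1, A_2, A_3, \dots$ be independent and identically distributed real random variables, each with Gaussian distribution $\mathcal{N}(\mu,\sigma^2)$, $\sigma>0$. For $k\ge 2$ let $\mathbf A^{(k)}=(A_1,\dots,A_k)\in\mathbb R^k$ and $$S_k=\operatorname{softmax}_k(\mathbf A^{(k)})_1=\frac{e^{A_1}}{\sum_{j=1}^k e^{A_j}}.$$ For a threshold $\tau\in\mathbb R$ consider the binarized variable $\hat B_k(\tau)=\operatorname{sign}(S_k-\tau)\in\{-1,1\}$, and let $\tau_k$ be the threshold that maximizes the Shannon entropy $\mathcal H(\hat B_k(\tau))$ over $\tau\in\mathbb R$ (equivalently, the value with $P(S_k\le \tau_k)=\tfrac12$). Then the entropy-maximizing threshold is negatively correlated with the number of elements $k$: $\tau_{k+1}<\tau_k$ for every $k\ge 2$.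
   Context: $\operatorname{sign}(x)=1$ if $x\ge 0$ and $-1$ otherwise. The Shannon entropy of a random variable $B$ taking values in $\{-1,1\}$ is $\mathcal H(B)=-\sum_{b\in\{-1,1\}}p(b)\log p(b)$. *)

theory Defs
  imports "HOL-Probability.Probability"
begin

definition sign1 :: "real \<Rightarrow> real" where
  "sign1 x = (if x \<ge> 0 then 1 else -1)"

definition softmax1 :: "(nat \<Rightarrow> 'a \<Rightarrow> real) \<Rightarrow> nat \<Rightarrow> 'a \<Rightarrow> real" where
  "softmax1 A k w = exp (A 1 w) / (\<Sum>j=1..k. exp (A j w))"

definition binarized :: "(nat \<Rightarrow> 'a \<Rightarrow> real) \<Rightarrow> nat \<Rightarrow> real \<Rightarrow> 'a \<Rightarrow> real" where
  "binarized A k \<tau> w = sign1 (softmax1 A k w - \<tau>)"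

text \<open>Shannon entropy (natural log; 0 log 0 = 0 since 0 * _ = 0) of B_k(tau)
  under the probability measure M\<close>
definition binarized_entropy :: "'a measure \<Rightarrow> (nat \<Rightarrow> 'a \<Rightarrow> real) \<Rightarrow> nat \<Rightarrow> real \<Rightarrow> real" where
  "binarized_entropy M A k \<tau> =
     - (\<Sum>b\<in>{-1, 1::real}.
          measure M {w \<in> space M. binarized A k \<tau> w = b} *
          ln (measure M {w \<in> space M. binarized A k \<tau> w = b}))"

definition entropy_max_threshold :: "'a measure \<Rightarrow> (nat \<Rightarrow> 'a \<Rightarrow> real) \<Rightarrow> nat \<Rightarrow> real \<Rightarrow> bool" where
  "entropy_max_threshold M A k \<tau> \<longleftrightarrow>
     (\<forall>t. binarized_entropy M A k t \<le> binarized_entropy M A k \<tau>)"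

end

theory Submission
  imports Defs
begin

text \<open>Write S_k for the first softmax coordinate. It has no atoms: S_k = t forces A_1 to be a
  function of the independent sum exp A_2 + ... + exp A_k, while A_1 has a density. Hence
  sign (S_k - \<tau>) equals -1 with probability P (S_k \<le> \<tau>), its entropy is the binary entropy of
  that probability, and the entropy-maximizing thresholds are exactly the medians of S_k, which
  exist since the distribution function is continuous. Pointwise S_(k+1) < S_k, and for every
  m in (0, 1) the Gaussian vector lands with positive probability in a box on which
  S_(k+1) \<le> m < S_k. Taking m = \<tau>_k gives P (S_(k+1) \<le> \<tau>_k) > P (S_k \<le> \<tau>_k) = 1/2, so the
  median \<tau>_(k+1) lies strictly below \<tau>_k.\<close>

section \<open>Binary entropy\<close>

definition binary_entropy :: "real \<Rightarrow> real" where
  "binary_entropy p = - (p * ln p + (1 - p) * ln (1 - p))"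

lemma binary_entropy_half: "binary_entropy (1/2) = ln 2"
  by (simp add: binary_entropy_def ln_div)

lemma binary_entropy_less_ln2:
  assumes "0 \<le> p" "p \<le> 1" "p \<noteq> 1/2"
  shows "binary_entropy p < ln 2"
proof (cases "p = 0 \<or> p = 1")
  case True
  then show ?thesis by (auto simp: binary_entropy_def)
next
  case False
  with assms have p: "0 < p" "p < 1" by auto
  \<comment> \<open>Gibbs' inequality against the uniform distribution on two points\<close>
  have "p * (ln (1/2) - ln p) < p * ((1/2 - p) / p)"
    using p assms by (intro mult_strict_left_mono ln_diff_less) auto
  moreover have "(1 - p) * (ln (1/2) - ln (1 - p)) < (1 - p) * ((1/2 - (1 - p)) / (1 - p))"
    using p assms by (intro mult_strict_left_mono ln_diff_less) auto
  ultimately have "p * (ln (1/2) - ln p) + (1 - p) * (ln (1/2) - ln (1 - p)) < 0"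
    using p by simp
  then show ?thesis
    by (simp add: binary_entropy_def ln_div algebra_simps)
qed

lemma binary_entropy_le_ln2: "0 \<le> p \<Longrightarrow> p \<le> 1 \<Longrightarrow> binary_entropy p \<le> ln 2"
  by (metis binary_entropy_half binary_entropy_less_ln2 less_imp_le order_refl)

section \<open>Atomless random variables and medians\<close>

lemma (in prob_space) atomless_median_exists:
  fixes X :: "'a \<Rightarrow> real"
  assumes X[measurable]: "X \<in> borel_measurable M"
    and atomless: "\<And>t. prob {w \<in> space M. X w = t} = 0"
  shows "\<exists>t. prob {w \<in> space M. X w \<le> t} = 1/2"
proof -
  let ?D = "distr M borel X"
  interpret D: real_distribution ?D by simp
  have cdf: "cdf ?D t = prob {w \<in> space M. X w \<le> t}" for t
    unfolding cdf_def by (subst measure_distr) (auto intro!: arg_cong[where f = prob])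
  have cont: "isCont (cdf ?D) t" for t
    using atomless[of t] by (subst D.isCont_cdf, subst measure_distr) (auto simp: vimage_def Int_def conj_commute)
  have "\<forall>\<^sub>F t in at_bot. cdf ?D t < 1/2"
    using D.cdf_lim_at_bot by (rule order_tendstoD) simp
  then obtain a where a: "cdf ?D a < 1/2" by (auto simp: eventually_at_bot_linorder)
  have "\<forall>\<^sub>F t in at_top. 1/2 < cdf ?D t"
    using D.cdf_lim_at_top_prob by (rule order_tendstoD) simp
  then obtain b where b: "1/2 < cdf ?D b" "a \<le> b"
    by (metis eventually_at_top_linorder nle_le)
  obtain t where "cdf ?D t = 1/2"
    using IVT[of "cdf ?D" a "1/2" b] a b cont by force
  then show ?thesis by (auto simp: cdf)
qed

lemma (in prob_space) indep_var_density_graph_null: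
  fixes X W :: "'a \<Rightarrow> real" and g :: "real \<Rightarrow> real"
  assumes ind: "indep_var borel X borel W" and X: "distributed M lborel X f"
    and g[measurable]: "g \<in> borel_measurable borel"
  shows "prob {w \<in> space M. X w = g (W w)} = 0"
proof -
  let ?DX = "distr M borel X" and ?DW = "distr M borel W"
  have [measurable]: "X \<in> borel_measurable M" "W \<in> borel_measurable M"
    and joint: "?DX \<Otimes>\<^sub>M ?DW = distr M (borel \<Otimes>\<^sub>M borel) (\<lambda>w. (X w, W w))"
    using ind unfolding indep_var_distribution_eq by auto
  interpret X: prob_space ?DX by (rule prob_space_distr) simp
  interpret W: prob_space ?DW by (rule prob_space_distr) simp
  interpret XW: pair_prob_space ?DX ?DW ..
  define G where "G = {p \<in> space (borel \<Otimes>\<^sub>M borel :: (real \<times> real) measure). fst p = g (snd p)}"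
  have [measurable]: "G \<in> sets (borel \<Otimes>\<^sub>M borel)"
    unfolding G_def by measurable
  have DX: "?DX = density lborel f"
    using X by (subst distr_cong[of M M borel lborel]) (auto simp: distributed_distr_eq_density)
  have no_atom: "emeasure ?DX {a} = 0" for a
  proof -
    have [measurable]: "f \<in> borel_measurable lborel"
      using X by (simp add: distributed_def)
    have "emeasure ?DX {a} = (\<integral>\<^sup>+x. f x * indicator {a} x \<partial>lborel)"
      unfolding DX by (rule emeasure_density) auto
    also have "\<dots> = 0"
      using AE_lborel_singleton[of a] by (subst nn_integral_0_iff_AE) (auto elim!: eventually_mono)
    finally show ?thesis .
  qed
  have "emeasure M {w \<in> space M. X w = g (W w)} = emeasure M ((\<lambda>w. (X w, W w)) -` G \<inter> space M)"
    by (rule arg_cong[where f = "emeasure M"]) (auto simp: G_def space_pair_measure)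
  also have "\<dots> = emeasure (?DX \<Otimes>\<^sub>M ?DW) G"
    by (simp add: joint emeasure_distr)
  also have "\<dots> = (\<integral>\<^sup>+y. emeasure ?DX ((\<lambda>x. (x, y)) -` G) \<partial>?DW)"
    by (rule XW.emeasure_pair_measure_alt2) simp
  also have "\<dots> = (\<integral>\<^sup>+y. emeasure ?DX {g y} \<partial>?DW)"
    by (intro nn_integral_cong arg_cong[where f = "emeasure ?DX"]) (auto simp: G_def space_pair_measure)
  finally show ?thesis
    by (simp add: no_atom measure_def)
qed

lemma (in prob_space) distributed_interval_prob_pos:
  fixes X :: "'a \<Rightarrow> real"
  assumes X: "distributed M lborel X f" and f_pos: "\<And>x. 0 < f x" and "a < b"
  shows "0 < prob (X -` {a..b} \<inter> space M)"
proof -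
  have f: "f \<in> borel_measurable lborel"
    using X by (simp add: distributed_def)
  have "(\<integral>\<^sup>+x. f x * indicator {a..b} x \<partial>lborel) \<noteq> 0"
  proof
    assume "(\<integral>\<^sup>+x. f x * indicator {a..b} x \<partial>lborel) = 0"
    then have "AE x in lborel. x \<notin> {a..b}"
      using f by (subst (asm) nn_integral_0_iff_AE)
        (auto simp: f_pos[THEN less_imp_neq, symmetric] elim!: eventually_mono)
    then have "{a..b} \<in> null_sets lborel"
      by (subst AE_iff_null_sets) auto
    with \<open>a < b\<close> show False by auto
  qed
  moreover have "emeasure M (X -` {a..b} \<inter> space M) = (\<integral>\<^sup>+x. f x * indicator {a..b} x \<partial>lborel)"
    using X by (rule distributed_emeasure) simp
  ultimately show ?thesis
    by (metis emeasure_eq_measure ennreal_0 zero_less_measure_iff)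
qed

lemma (in prob_space) median_between_bounds:
  fixes X :: "'a \<Rightarrow> real"
  assumes bounds: "\<And>w. w \<in> space M \<Longrightarrow> a < X w \<and> X w < b"
    and median: "prob {w \<in> space M. X w \<le> t} = 1/2"
  shows "a < t \<and> t < b"
proof (rule ccontr)
  assume "\<not> (a < t \<and> t < b)"
  then have "{w \<in> space M. X w \<le> t} = {} \<or> {w \<in> space M. X w \<le> t} = space M"
    using bounds by (force simp: not_less)
  then show False
    using median by (elim disjE) (simp_all add: prob_space)
qed

lemma (in prob_space) threshold_less_of_dominated_gap:
  fixes X Y :: "'a \<Rightarrow> real"
  assumes [measurable]: "X \<in> borel_measurable M" "Y \<in> borel_measurable M"
    and dominated: "\<And>w. w \<in> space M \<Longrightarrow> Y w \<le> X w"
    and gap: "0 < prob {w \<in> space M. Y w \<le> s \<and> s < X w}"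
    and same_prob: "prob {w \<in> space M. Y w \<le> t} = prob {w \<in> space M. X w \<le> s}"
  shows "t < s"
proof (rule ccontr)
  assume "\<not> t < s"
  let ?F = "{w \<in> space M. X w \<le> s}" and ?G = "{w \<in> space M. Y w \<le> s \<and> s < X w}"
  have "?F \<union> ?G \<subseteq> {w \<in> space M. Y w \<le> t}"
    using dominated \<open>\<not> t < s\<close> by force
  then have "prob (?F \<union> ?G) \<le> prob {w \<in> space M. Y w \<le> t}"
    by (intro finite_measure_mono) measurable
  moreover have "prob (?F \<union> ?G) = prob ?F + prob ?G"
    by (rule finite_measure_Union) auto
  ultimately show False
    using gap same_prob by simp
qed

section \<open>The first softmax coordinate\<close>

lemma softmax1_split:
  "1 \<le> k \<Longrightarrow> softmax1 A k w = exp (A 1 w) / (exp (A 1 w) + (\<Sum>i=2..k. exp (A i w)))"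
  unfolding softmax1_def by (subst sum.atLeast_Suc_atMost) (auto simp: numeral_2_eq_2)

lemma softmax1_pos: "1 \<le> k \<Longrightarrow> 0 < softmax1 A k w"
  unfolding softmax1_def by (intro divide_pos_pos sum_pos) auto

lemma softmax1_less_one: "2 \<le> k \<Longrightarrow> softmax1 A k w < 1"
  using sum_pos[of "{2..k}" "\<lambda>i. exp (A i w)"]
  by (simp add: softmax1_split add_pos_pos divide_less_eq)

lemma softmax1_Suc_less: "1 \<le> k \<Longrightarrow> softmax1 A (Suc k) w < softmax1 A k w"
  unfolding softmax1_def by (auto intro!: divide_strict_left_mono sum_pos mult_pos_pos add_pos_pos)

lemma softmax1_measurable:
  "(\<And>i. 1 \<le> i \<Longrightarrow> A i \<in> borel_measurable M) \<Longrightarrow> softmax1 A k \<in> borel_measurable M"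
  unfolding softmax1_def
  by (intro borel_measurable_divide borel_measurable_sum measurable_compose[OF _ borel_measurable_exp]) auto

text \<open>With c = m / (1 - m): m < S_k iff exp A_1 > c (exp A_2 + ... + exp A_k), and S_(k+1) \<le> m
  iff exp A_1 \<le> c (exp A_2 + ... + exp A_(k+1)). On the box below the middle sum is at most
  (k - 1) e, while exp A_1 lies in [c (k - 1) e^2, c (k - 1) e^3] and exp A_(k+1) \<ge> (k - 1) e^3.\<close>

lemma softmax1_Suc_le_less:
  fixes m :: real
  defines "c \<equiv> m / (1 - m)"
  assumes k: "2 \<le> k" and m: "0 < m" "m < 1"
    and first: "ln (c * (real k - 1)) + 2 \<le> A 1 w" "A 1 w \<le> ln (c * (real k - 1)) + 3"
    and middle: "\<And>i. i \<in> {2..k} \<Longrightarrow> A i w \<le> 1"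
    and last: "ln (real k - 1) + 3 \<le> A (Suc k) w"
  shows "softmax1 A (Suc k) w \<le> m \<and> m < softmax1 A k w"
proof -
  define n where "n = real k - 1"
  define X where "X = exp (A 1 w)"
  define Y where "Y = (\<Sum>i=2..k. exp (A i w))"
  define Z where "Z = exp (A (Suc k) w)"
  have pos: "0 < c" "0 < n" "0 < X" "0 < Y" "0 < Z"
    using k m by (auto simp: c_def n_def X_def Y_def Z_def intro!: sum_pos)
  have "Y \<le> of_nat (card {2..k}) * exp 1"
    unfolding Y_def using middle by (intro sum_bounded_above) simp
  then have Y: "Y \<le> n * exp 1"
    using k by (simp add: n_def of_nat_diff)
  have "exp (ln (c * n) + 2) \<le> X" "X \<le> exp (ln (c * n) + 3)"
    using first by (simp_all add: X_def n_def)
  then have X: "c * n * exp 2 \<le> X" "X \<le> c * n * exp 3"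
    using pos by (simp_all add: exp_add)
  have "exp (ln n + 3) \<le> Z"
    using last by (simp add: Z_def n_def)
  then have Z: "n * exp 3 \<le> Z"
    using pos by (simp add: exp_add)
  have "c * Y < X"
  proof -
    have "c * Y \<le> c * n * exp 1" using Y pos by simp
    also have "\<dots> < c * n * exp 2" using pos by simp
    finally show ?thesis using X by simp
  qed
  have "X \<le> c * (Y + Z)"
  proof -
    have "X \<le> c * (n * exp 3)" using X by (simp add: mult.assoc)
    also have "\<dots> \<le> c * (Y + Z)" using Z pos by (intro mult_left_mono) auto
    finally show ?thesis .
  qed
  have "m < X / (X + Y)"
    using \<open>c * Y < X\<close> m pos by (simp add: c_def field_simps)
  moreover have "X / (X + (Y + Z)) \<le> m"
    using \<open>X \<le> c * (Y + Z)\<close> m pos by (simp add: c_def field_simps)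
  moreover have "softmax1 A k w = X / (X + Y)" "softmax1 A (Suc k) w = X / (X + (Y + Z))"
    using k by (simp_all add: softmax1_split X_def Y_def Z_def add.commute)
  ultimately show ?thesis by simp
qed

lemma (in prob_space) binarized_entropy_eq_binary_entropy:
  assumes [measurable]: "softmax1 A k \<in> borel_measurable M"
    and atomless: "prob {w \<in> space M. softmax1 A k w = \<tau>} = 0"
  shows "binarized_entropy M A k \<tau> = binary_entropy (prob {w \<in> space M. softmax1 A k w \<le> \<tau>})"
proof -
  let ?le = "{w \<in> space M. softmax1 A k w \<le> \<tau>}" and ?lt = "{w \<in> space M. softmax1 A k w < \<tau>}"
  have "?le = ?lt \<union> {w \<in> space M. softmax1 A k w = \<tau>}"
    by auto
  then have "prob ?le = prob ?lt + prob {w \<in> space M. softmax1 A k w = \<tau>}"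
    by (simp only:) (rule finite_measure_Union, auto)
  then have lt: "prob ?lt = prob ?le"
    using atomless by simp
  have "{w \<in> space M. binarized A k \<tau> w = -1} = ?lt"
    by (auto simp: binarized_def sign1_def)
  moreover have "{w \<in> space M. binarized A k \<tau> w = 1} = space M - ?lt"
    by (auto simp: binarized_def sign1_def)
  ultimately show ?thesis
    by (simp add: binarized_entropy_def binary_entropy_def prob_compl lt)
qed

lemma (in prob_space) entropy_max_threshold_iff_median:
  assumes "softmax1 A k \<in> borel_measurable M"
    and "\<And>t. prob {w \<in> space M. softmax1 A k w = t} = 0"
  shows "entropy_max_threshold M A k \<tau> \<longleftrightarrow> prob {w \<in> space M. softmax1 A k w \<le> \<tau>} = 1/2"
proof -
  let ?F = "\<lambda>t. prob {w \<in> space M. softmax1 A k w \<le> t}"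
  have entropy: "binarized_entropy M A k t = binary_entropy (?F t)" for t
    using assms by (rule binarized_entropy_eq_binary_entropy)
  obtain m where m: "?F m = 1/2"
    using atomless_median_exists assms by blast
  have bound: "binary_entropy (?F t) \<le> ln 2" for t
    by (intro binary_entropy_le_ln2 measure_nonneg prob_le_1)
  have strict: "?F \<tau> \<noteq> 1/2 \<Longrightarrow> binary_entropy (?F \<tau>) < ln 2"
    by (intro binary_entropy_less_ln2 measure_nonneg prob_le_1)
  have "entropy_max_threshold M A k \<tau> \<longleftrightarrow> ln 2 \<le> binary_entropy (?F \<tau>)"
    unfolding entropy_max_threshold_def entropy
  proof
    assume "\<forall>t. binary_entropy (?F t) \<le> binary_entropy (?F \<tau>)"
    from this[rule_format, of m] show "ln 2 \<le> binary_entropy (?F \<tau>)"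
      by (simp add: m binary_entropy_half)
  qed (blast intro: order_trans[OF bound])
  also have "\<dots> \<longleftrightarrow> ?F \<tau> = 1/2"
  proof
    show "ln 2 \<le> binary_entropy (?F \<tau>) \<Longrightarrow> ?F \<tau> = 1/2"
      using strict by (meson not_le)
  qed (simp only: binary_entropy_half order_refl)
  finally show ?thesis .
qed

section \<open>Independent Gaussian logits\<close>

lemma (in prob_space) indep_var_first_sum_exp_rest:
  fixes A :: "nat \<Rightarrow> 'a \<Rightarrow> real" and k :: nat
  assumes "indep_vars (\<lambda>_. borel) A {1..}"
  shows "indep_var borel (A 1) borel (\<lambda>w. \<Sum>i=2..k. exp (A i w))"
proof -
  define V where "V i = (if i = 1 then A i else (\<lambda>w. exp (A i w)))" for i
  have "indep_vars (\<lambda>_. borel) (\<lambda>i w. (if i = 1 then id else exp) (A i w)) (insert 1 {2..k})"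
    using assms by (rule indep_vars_compose2[OF indep_vars_subset]) auto
  then have "indep_vars (\<lambda>_. borel) V (insert 1 {2..k})"
    by (rule indep_vars_cong[THEN iffD1, rotated 3]) (auto simp: V_def)
  then have "indep_var borel (V 1) borel (\<lambda>w. \<Sum>i\<in>{2..k}. V i w)"
    by (intro indep_vars_sum) auto
  then show ?thesis
    by (simp add: V_def)
qed

locale iid_gaussian_logits = prob_space +
  fixes A :: "nat \<Rightarrow> 'a \<Rightarrow> real" and \<mu> \<sigma> :: real
  assumes \<sigma>: "0 < \<sigma>"
    and indep: "indep_vars (\<lambda>_. borel) A {1..}"
    and gaussian: "\<And>i. 1 \<le> i \<Longrightarrow> distributed M lborel (A i) (\<lambda>x. ennreal (normal_density \<mu> \<sigma> x))"
begin

lemma gaussian_measurable: "1 \<le> i \<Longrightarrow> A i \<in> borel_measurable M"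
  using distributed_measurable[OF gaussian] by simp

lemma gaussian_softmax1_measurable: "softmax1 A k \<in> borel_measurable M"
  using gaussian_measurable by (rule softmax1_measurable)

lemma gaussian_softmax1_atomless:
  assumes k: "2 \<le> k"
  shows "prob {w \<in> space M. softmax1 A k w = t} = 0"
proof (cases "0 < t \<and> t < 1")
  case False
  then have "{w \<in> space M. softmax1 A k w = t} = {}"
    using softmax1_pos[of k A] softmax1_less_one[OF k, of A] k by force
  then show ?thesis by (metis measure_empty)
next
  case True
  define c where "c = t / (1 - t)"
  let ?G = "{w \<in> space M. A 1 w = ln (c * (\<Sum>i=2..k. exp (A i w)))}"
  have "A 1 w = ln (c * (\<Sum>i=2..k. exp (A i w)))" if "softmax1 A k w = t" for w
  proof -
    have "0 < exp (A 1 w) + (\<Sum>i=2..k. exp (A i w))"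
      using k by (intro add_pos_pos sum_pos) auto
    then have "exp (A 1 w) = t * (exp (A 1 w) + (\<Sum>i=2..k. exp (A i w)))"
      using that k by (simp add: softmax1_split divide_eq_eq)
    then have "exp (A 1 w) = c * (\<Sum>i=2..k. exp (A i w))"
      using True by (simp add: c_def field_simps)
    then show ?thesis
      by (metis ln_exp)
  qed
  then have sub: "{w \<in> space M. softmax1 A k w = t} \<subseteq> ?G"
    by blast
  have null: "prob ?G = 0"
    using indep_var_first_sum_exp_rest[OF indep] gaussian[of 1]
    by (rule indep_var_density_graph_null) simp_all
  have "?G \<in> events"
    using gaussian_measurable
    by (intro measurable_equality_set borel_measurable_ln borel_measurable_times borel_measurable_sum
        measurable_compose[OF _ borel_measurable_exp]) auto
  then have "prob {w \<in> space M. softmax1 A k w = t} \<le> 0"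
    using finite_measure_mono[OF sub] null by simp
  then show ?thesis
    by (intro order_antisym measure_nonneg)
qed

lemma gaussian_softmax1_gap_prob_pos:
  assumes k: "2 \<le> k" and m: "0 < m" "m < 1"
  shows "0 < prob {w \<in> space M. softmax1 A (Suc k) w \<le> m \<and> m < softmax1 A k w}"
proof -
  define c where "c = m / (1 - m)"
  define lo where "lo i = (if i = 1 then ln (c * (real k - 1)) + 2
    else if i = Suc k then ln (real k - 1) + 3 else 0)" for i
  define E where "E = (\<Inter>i\<in>{1..Suc k}. A i -` {lo i..lo i + 1} \<inter> space M)"
  have "prob E = (\<Prod>i\<in>{1..Suc k}. prob (A i -` {lo i..lo i + 1} \<inter> space M))"
    unfolding E_def by (rule indep_varsD[OF indep]) auto
  also have "\<dots> > 0"
    using \<sigma> by (intro prod_pos ballI distributed_interval_prob_pos[OF gaussian])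
      (auto simp: normal_density_pos)
  finally have "0 < prob E" .
  moreover have "E \<subseteq> {w \<in> space M. softmax1 A (Suc k) w \<le> m \<and> m < softmax1 A k w}"
  proof safe
    fix w assume "w \<in> E"
    then have box: "\<And>i. i \<in> {1..Suc k} \<Longrightarrow> lo i \<le> A i w \<and> A i w \<le> lo i + 1"
      by (auto simp: E_def)
    have "A i w \<le> 1" if "i \<in> {2..k}" for i
      using box[of i] that by (simp add: lo_def)
    then show "softmax1 A (Suc k) w \<le> m" "m < softmax1 A k w"
      using softmax1_Suc_le_less[OF k m, of A w] box[of 1] box[of "Suc k"] k
      by (simp_all add: lo_def c_def)
  qed (auto simp: E_def)
  moreover have "{w \<in> space M. softmax1 A (Suc k) w \<le> m \<and> m < softmax1 A k w} \<in> events"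
    using gaussian_softmax1_measurable[of k] gaussian_softmax1_measurable[of "Suc k"] by measurable
  ultimately show ?thesis
    using finite_measure_mono by (meson less_le_trans)
qed

lemma softmax1_median_Suc_less:
  assumes k: "2 \<le> k"
    and median: "prob {w \<in> space M. softmax1 A k w \<le> s} = 1/2"
      "prob {w \<in> space M. softmax1 A (Suc k) w \<le> t} = 1/2"
  shows "t < s"
proof -
  have "0 < s \<and> s < 1"
    using softmax1_pos[of k A] softmax1_less_one[OF k, of A] k
    by (intro median_between_bounds[OF _ median(1)]) simp
  then have gap: "0 < prob {w \<in> space M. softmax1 A (Suc k) w \<le> s \<and> s < softmax1 A k w}"
    using k by (intro gaussian_softmax1_gap_prob_pos) auto
  have dominated: "softmax1 A (Suc k) w \<le> softmax1 A k w" for w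
    using softmax1_Suc_less[of k A w] k by simp
  show ?thesis
    using median by (intro threshold_less_of_dominated_gap[OF gaussian_softmax1_measurable
        gaussian_softmax1_measurable dominated gap]) simp
qed

end

theorem theorem1:
  fixes M :: "'a measure" and A :: "nat \<Rightarrow> 'a \<Rightarrow> real" and \<mu> \<sigma> :: real and k :: nat
  assumes "prob_space M"
    and "\<sigma> > 0"
    and "prob_space.indep_vars M (\<lambda>_. borel) A {1..}"
    and "\<And>i. i \<ge> 1 \<Longrightarrow> distributed M lborel (A i) (\<lambda>x. ennreal (normal_density \<mu> \<sigma> x))"
    and "k \<ge> 2"
  shows "(\<exists>t. entropy_max_threshold M A k t)
       \<and> (\<exists>t. entropy_max_threshold M A (k + 1) t)
       \<and> (\<forall>t1 t2. entropy_max_threshold M A k t1 \<longrightarrow> entropy_max_threshold M A (k + 1) t2 \<longrightarrow> t2 < t1)"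
proof -
  interpret iid_gaussian_logits M A \<mu> \<sigma>
    using assms by (simp add: iid_gaussian_logits_def iid_gaussian_logits_axioms_def)
  have max_iff: "entropy_max_threshold M A j t \<longleftrightarrow> prob {w \<in> space M. softmax1 A j w \<le> t} = 1/2"
    if "2 \<le> j" for j t
    using gaussian_softmax1_measurable gaussian_softmax1_atomless[OF that]
    by (rule entropy_max_threshold_iff_median)
  have "\<exists>t. entropy_max_threshold M A j t" if "2 \<le> j" for j
    using atomless_median_exists[OF gaussian_softmax1_measurable gaussian_softmax1_atomless[OF that]]
      max_iff[OF that] by blast
  moreover have "t2 < t1"
    if "entropy_max_threshold M A k t1" "entropy_max_threshold M A (Suc k) t2" for t1 t2
    using that max_iff[of k t1] max_iff[of "Suc k" t2] \<open>k \<ge> 2\<close>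
    by (intro softmax1_median_Suc_less) simp_all
  ultimately show ?thesis
    using \<open>k \<ge> 2\<close> by simp
qed

end
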